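(* Let $\mathcal{H}=(Q_0,Q_1,\beta)$ be a directed tensor-labeled hypergraph over $\mathbb{R}$ and $k\ge0$. The operator $L_{\le k}:=(\pi_{\le k}\partial_\beta)^*(\pi_{\le k}\partial_\beta)$ on $\mathbb{R}^{Q_1}$ satisfies: (1) $L_{\le k}$ is symmetric positive semi-definite; (2) $\mathrm{Ker}(L_{\le k})=\mathcal{Z}_{\le k}(\mathcal{H})$; (3) $\mathrm{rank}(L_{\le k})=|V_{\mathrm{macro}}|-c_{\mathrm{macro}}-\delta_{\le k}(\mathcal{H})$; (4) if $k\le\ell$ then $L_{\le k}\preceq L_{\le\ell}$ in the Loewner order, and writing the eigenvalues of $L_{\le k}$ in ascending order $0\le\lambda_1^{(k)}\le\cdots\le\lambda_{|Q_1|}^{(k)}$, one has $\lambda_i^{(k)}\le\lambda_i^{(\ell)}$ for all $i$.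
   Context: $T(\mathbb{R}^{Q_0})=\bigoplus_{k\ge0}T^k$, $T^k=(\mathbb{R}^{Q_0})^{\otimes k}$, with the inner product making the standard tensor basis orthonormal (distinct degrees orthogonal); $\pi_{\le k}$ is the orthogonal projection onto $\bigoplus_{j\le k}T^j$. $\mathbb{R}^{Q_1}$ has the standard inner product. A directed tensor-labeled hypergraph is $\mathcal{H}=(Q_0,Q_1,\beta)$ ($Q_0,Q_1$ finite) with $\beta:\mathbb{R}^{Q_1}\to T\times T$ linear, $\beta(\mathbf{1}_e)=(A_e,B_e)$; $\partial_\beta:\mathbf{1}_e\mapsto B_e-A_e$; $^*$ denotes adjoint. $\mathcal{Z}_{\le k}(\mathcal{H})=\mathrm{Ker}(\pi_{\le k}\circ\partial_\beta)$. $V_{\mathrm{macro}}=\{A_e\}\cup\{B_e\}$; macrograph on $V_{\mathrm{macro}}$ with edges $Q_1$, $e:A_e\to B_e$, $c_{\mathrm{macro}}$ its number of weakly connected components; $B_{\mathrm{macro}}:\mathbf{1}_e\mapsto\mathbf{1}_{B_e}-\mathbf{1}_{A_e}$; $\hat\phi:\mathbb{R}^{V_{\mathrm{macro}}}\to T(\mathbb{R}^{Q_0})$, $\mathbf{1}_w\mapsto w$; $\delta_{\le k}(\mathcal{H})=\dim(\mathrm{Im}B_{\mathrm{macro}}\cap\mathrm{Ker}(\pi_{\le k}\circ\hat\phi))$. *)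

theory Defs
  imports "HOL-Analysis.Analysis" "HOL-Computational_Algebra.Polynomial" "HOL-Library.Function_Algebras"
begin

text \<open>Tensors in T(R^Q0) are finitely supported real functions on words over Q0;
  the word w = [q1,...,qn] stands for the basis tensor e_q1 (x) ... (x) e_qn,
  so the degree of w is its length. Q1 is the finite index type 'e, R^Q1 = real^'e.\<close>

type_synonym 'v tensor = "'v list \<Rightarrow> real"

definition tensor_inner :: "'v tensor \<Rightarrow> 'v tensor \<Rightarrow> real" where
  "tensor_inner s t = infsum (\<lambda>w. s w * t w) UNIV"

definition trunc :: "nat \<Rightarrow> 'v tensor \<Rightarrow> 'v tensor" where
  "trunc k t = (\<lambda>w. if length w \<le> k then t w else 0)"

definition bdry :: "('e::finite \<Rightarrow> 'v tensor) \<Rightarrow> ('e \<Rightarrow> 'v tensor) \<Rightarrow> real^'e \<Rightarrow> 'v tensor" where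
  "bdry A B x = (\<lambda>w. \<Sum>e\<in>UNIV. x $ e * (B e w - A e w))"

text \<open>adjoint of a linear map D : R^Q1 -> T w.r.t. the standard inner products
  (R^Q1 has the orthonormal basis axis e 1)\<close>
definition tensor_adjoint :: "(real^'e::finite \<Rightarrow> 'v tensor) \<Rightarrow> 'v tensor \<Rightarrow> real^'e" where
  "tensor_adjoint D t = (\<chi> e. tensor_inner (D (axis e 1)) t)"

definition Lop :: "('e::finite \<Rightarrow> 'v tensor) \<Rightarrow> ('e \<Rightarrow> 'v tensor) \<Rightarrow> nat \<Rightarrow> real^'e \<Rightarrow> real^'e" where
  "Lop A B k x = tensor_adjoint (\<lambda>y. trunc k (bdry A B y)) (trunc k (bdry A B x))"

definition Lmat :: "('e::finite \<Rightarrow> 'v tensor) \<Rightarrow> ('e \<Rightarrow> 'v tensor) \<Rightarrow> nat \<Rightarrow> real^'e^'e" where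
  "Lmat A B k = matrix (Lop A B k)"

definition Zk :: "('e::finite \<Rightarrow> 'v tensor) \<Rightarrow> ('e \<Rightarrow> 'v tensor) \<Rightarrow> nat \<Rightarrow> (real^'e) set" where
  "Zk A B k = {x. trunc k (bdry A B x) = (\<lambda>_. 0)}"

definition Vmacro :: "('e \<Rightarrow> 'v tensor) \<Rightarrow> ('e \<Rightarrow> 'v tensor) \<Rightarrow> 'v tensor set" where
  "Vmacro A B = range A \<union> range B"

definition macro_edges :: "('e \<Rightarrow> 'v tensor) \<Rightarrow> ('e \<Rightarrow> 'v tensor) \<Rightarrow> ('v tensor \<times> 'v tensor) set" where
  "macro_edges A B = (\<lambda>e. (A e, B e)) ` UNIV"

definition c_macro :: "('e \<Rightarrow> 'v tensor) \<Rightarrow> ('e \<Rightarrow> 'v tensor) \<Rightarrow> nat" where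
  "c_macro A B = card (Vmacro A B // ((macro_edges A B \<union> (macro_edges A B)\<inverse>)\<^sup>*))"

text \<open>R^{V_macro} is represented by real functions on tensors supported in V_macro\<close>
definition Bmacro :: "('e::finite \<Rightarrow> 'v tensor) \<Rightarrow> ('e \<Rightarrow> 'v tensor) \<Rightarrow> real^'e \<Rightarrow> ('v tensor \<Rightarrow> real)" where
  "Bmacro A B x = (\<lambda>v. \<Sum>e\<in>UNIV. x $ e * (indicator {B e} v - indicator {A e} v))"

definition phi_hat :: "('e \<Rightarrow> 'v tensor) \<Rightarrow> ('e \<Rightarrow> 'v tensor) \<Rightarrow> ('v tensor \<Rightarrow> real) \<Rightarrow> 'v tensor" where
  "phi_hat A B f = (\<lambda>w. \<Sum>v\<in>Vmacro A B. f v * v w)"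

definition delta :: "('e::finite \<Rightarrow> 'v tensor) \<Rightarrow> ('e \<Rightarrow> 'v tensor) \<Rightarrow> nat \<Rightarrow> nat" where
  "delta A B k = vector_space.dim (\<lambda>(r::real) (f::'v tensor \<Rightarrow> real). (\<lambda>v. r * f v))
      (range (Bmacro A B) \<inter> {f. trunc k (phi_hat A B f) = (\<lambda>_. 0)})"

definition charpoly :: "real^'n^'n \<Rightarrow> real poly" where
  "charpoly M = det ((\<chi> i j. if i = j then [:0, 1:] else 0) - (\<chi> i j. [: M $ i $ j :]))"

text \<open>eigenvalues with multiplicity, in ascending order (for matrices whose characteristic
  polynomial splits over R, e.g. symmetric ones); index i here is lambda_{i+1} in the paper\<close>
definition eigenvalues_asc :: "real^'n::finite^'n \<Rightarrow> real list" where
  "eigenvalues_asc M = (THE xs. sorted xs \<and> length xs = CARD('n) \<and>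
       charpoly M = (\<Prod>x\<leftarrow>xs. [:-x, 1:]))"

end

theory Submission
  imports Defs
begin

(*
  x \<bullet> L_k x is the sum of (d x)(w)^2 over the words w of length at most k, i.e. L_k is the Gram
  matrix of the truncated boundary vectors. This gives symmetry, positive semi-definiteness,
  Ker L_k = Z_k, and x \<bullet> L_k x \<le> x \<bullet> L_l x for k \<le> l, since more words are summed.

  Monotonicity of the sorted eigenvalues is the Courant-Fischer argument: the eigenvectors of L_k
  with eigenvalue at least lambda_i(L_k) and those of L_l with eigenvalue at most lambda_i(L_l)
  span subspaces of dimensions n - i and i + 1, which therefore share a nonzero vector x, and
  lambda_i(L_k) |x|^2 \<le> x \<bullet> L_k x \<le> x \<bullet> L_l x \<le> lambda_i(L_l) |x|^2.

  For the rank, d factors as phi_hat o B_macro. Rank-nullity for B_macro on the whole space and on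
  Z_k, which contains Ker B_macro, gives rank L_k = rank B_macro - delta_k. The incidence map
  B_macro of the macrograph has rank |V_macro| - c_macro: the indicators of one vertex in each
  component complete a basis of its image to a basis of the functions supported on V_macro.
*)

section \<open>Direct sums and rank-nullity\<close>

lemma (in vector_space) in_span_remove_if_direct_sum:
  assumes direct: "span X \<inter> span Y \<subseteq> {0}" and a: "a \<in> X" "a \<notin> Y" "a \<in> span ((X \<union> Y) - {a})"
  shows "a \<in> span (X - {a})"
proof -
  have "(X \<union> Y) - {a} = (X - {a}) \<union> Y"
    using a(2) by blast
  then have "a \<in> {x + y |x y. x \<in> span (X - {a}) \<and> y \<in> span Y}"
    using a(3) by (simp only: span_Un)
  then obtain y z where yz: "a = y + z" "y \<in> span (X - {a})" "z \<in> span Y"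
    by blast
  have "z = a - y"
    using yz(1) by simp
  moreover have "a - y \<in> span X"
    using span_base[OF a(1)] span_mono[of "X - {a}" X] yz(2) by (blast intro: span_diff)
  ultimately have "z = 0"
    using direct yz(3) by blast
  then show ?thesis
    using yz by simp
qed

lemma (in vector_space) independent_Un:
  assumes B: "independent B" and C: "independent C" and direct: "span B \<inter> span C \<subseteq> {0}"
  shows "independent (B \<union> C)"
proof
  assume "dependent (B \<union> C)"
  then obtain a where a: "a \<in> B \<union> C" "a \<in> span ((B \<union> C) - {a})"
    unfolding dependent_def by blast
  have "a \<notin> B \<inter> C"
  proof
    assume "a \<in> B \<inter> C"
    then have "a = 0"
      using direct span_base by blast
    then show False
      using B \<open>a \<in> B \<inter> C\<close> dependent_zero by blast
  qed
  then consider "a \<in> B" "a \<notin> C" | "a \<in> C" "a \<notin> B"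
    using a(1) by blast
  then show False
  proof cases
    case 1
    then have "a \<in> span (B - {a})"
      using in_span_remove_if_direct_sum[OF direct] a(2) by blast
    then show False
      using B 1 dependent_def by blast
  next
    case 2
    then have "a \<in> span (C - {a})"
      using in_span_remove_if_direct_sum[of C B a] a(2) direct by (simp add: Int_commute Un_commute)
    then show False
      using C 2 dependent_def by blast
  qed
qed

lemma (in vector_space) dim_span_Un_independent:
  assumes R: "subspace R" "R \<subseteq> span F" "finite F"
    and G: "independent G" "R \<inter> span G \<subseteq> {0}" "finite G"
  shows "dim (span (R \<union> G)) = dim R + card G"
proof -
  obtain b where b: "b \<subseteq> R" "independent b" "R \<subseteq> span b" "card b = dim R"
    using basis_exists by blast
  have span_b: "span b = R"
    using b R(1) span_subspace by blast
  have "finite b"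
    using independent_span_bound[OF R(3) b(2)] b(1) R(2) by blast
  moreover note \<open>finite G\<close>
  moreover have "b \<inter> G \<subseteq> {0}"
    using G(2) b(1) span_base by blast
  then have "b \<inter> G = {}"
    using b(2) dependent_zero by blast
  moreover have "independent (b \<union> G)"
    using independent_Un[OF b(2) G(1)] G(2) span_b by blast
  moreover have "span (R \<union> G) = span (b \<union> G)"
  proof -
    have span_R: "span R = R"
      using R(1) by simp
    show ?thesis
      by (simp only: span_Un span_R span_b)
  qed
  ultimately show ?thesis
    using b(4) by (simp add: dim_eq_card_independent card_Un_disjoint)
qed

lemma (in finite_dimensional_vector_space) independent_Un_imp_span_Int_zero:
  assumes ind: "independent (B0 \<union> B1)" and disj: "B0 \<inter> B1 = {}"
  shows "span B0 \<inter> span B1 \<subseteq> {0}"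
proof -
  have ind01: "independent B0" "independent B1" "finite B0" "finite B1"
    using ind independent_mono finiteI_independent by blast+
  have "dim (span (B0 \<union> B1)) + dim (span B0 \<inter> span B1) = dim (span B0) + dim (span B1)"
    using dim_sums_Int[of "span B0" "span B1"] span_Un[of B0 B1] by simp
  then have "dim (span B0 \<inter> span B1) = 0"
    using ind ind01 disj by (simp add: dim_eq_card_independent card_Un_disjoint)
  then show ?thesis
    by simp
qed

lemma (in finite_dimensional_vector_space_pair_1) dim_image_add_dim_kernel:
  assumes f: "Vector_Spaces.linear s1 s2 f" and S: "vs1.subspace S"
  shows "vs2.dim (f ` S) + vs1.dim (S \<inter> {x. f x = 0}) = vs1.dim S"
proof -
  define K where "K = S \<inter> {x. f x = 0}"
  have K: "vs1.subspace K"
    unfolding K_def by (intro vs1.subspace_inter S linear_subspace_kernel[OF f])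
  obtain B0 where B0: "B0 \<subseteq> K" "vs1.independent B0" "K \<subseteq> vs1.span B0" "card B0 = vs1.dim K"
    using vs1.basis_exists by blast
  obtain B where B: "B0 \<subseteq> B" "B \<subseteq> S" "vs1.independent B" "S \<subseteq> vs1.span B"
    using vs1.maximal_independent_subset_extend[OF _ B0(2), of S] B0(1) by (auto simp: K_def)
  define B1 where "B1 = B - B0"
  have B_split: "B = B0 \<union> B1" "B0 \<inter> B1 = {}" "finite B"
    using B(1,3) vs1.finiteI_independent by (auto simp: B1_def)
  have ind1: "vs1.independent B1"
    using B(3) vs1.independent_mono by (auto simp: B1_def)
  have span_B0: "vs1.span B0 = K"
    using B0 K vs1.span_subspace by blast
  have span_B1: "vs1.span B1 \<subseteq> S"
    using B(2) S vs1.span_minimal[of B1 S] by (auto simp: B1_def)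
  have "inj_on f (vs1.span B1)"
    unfolding linear_inj_on_iff_eq_0[OF f vs1.subspace_span]
    using vs1.independent_Un_imp_span_Int_zero[of B0 B1] B(3) B_split span_B0 span_B1
    by (auto simp: K_def)
  moreover have "f ` S = f ` vs1.span B1"
  proof
    show "f ` S \<subseteq> f ` vs1.span B1"
    proof
      fix z assume "z \<in> f ` S"
      then obtain s where "z = f s" "s \<in> vs1.span (B0 \<union> B1)"
        using B(4) B_split(1) by blast
      then obtain x y where "z = f (x + y)" "x \<in> K" "y \<in> vs1.span B1"
        unfolding vs1.span_Un span_B0 by blast
      then show "z \<in> f ` vs1.span B1"
        by (simp add: linear_add[OF f] K_def)
    qed
  qed (use span_B1 in blast)
  ultimately have "vs2.dim (f ` S) = card B1"
    using dim_image_eq[OF f] ind1 by (simp add: vs1.span_span vs1.dim_eq_card_independent)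
  then show ?thesis
    using B_split B0(4) B(2,3,4) vs1.basis_card_eq_dim[of B S]
    by (simp add: K_def card_Un_disjoint)
qed

section \<open>The spectral theorem for real symmetric matrices\<close>

lemma quadratic_nonneg_imp_linear_coeff_zero:
  fixes a b :: real
  assumes nonneg: "\<And>t. 0 \<le> t * a + t\<^sup>2 * b"
  shows "a = 0"
proof (rule ccontr)
  assume "a \<noteq> 0"
  define c where "c = \<bar>b\<bar> + 1"
  have c: "c > 0" "b \<le> c - 1"
    by (auto simp: c_def)
  have "0 \<le> c\<^sup>2 * ((- a / c) * a + (- a / c)\<^sup>2 * b)"
    using nonneg[of "- a / c"] by simp
  also have "\<dots> = a\<^sup>2 * (b - c)"
    using c by (simp add: field_simps power2_eq_square)
  also have "\<dots> < 0"
    using \<open>a \<noteq> 0\<close> c by (simp add: mult_pos_neg)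
  finally show False
    by simp
qed

lemma symmetric_matrix_inner:
  fixes M :: "real^'n^'n"
  assumes "transpose M = M"
  shows "x \<bullet> (M *v y) = (M *v x) \<bullet> y"
  by (metis assms dot_lmul_matrix vector_transpose_matrix)

lemma maximiser_of_quadratic_form_is_eigenvector:
  fixes M :: "real^'n^'n"
  assumes sym: "transpose M = M" and S: "subspace S" and inv: "\<And>x. x \<in> S \<Longrightarrow> M *v x \<in> S"
    and x0: "x0 \<in> S" "norm x0 = 1"
    and max: "\<And>y. y \<in> S \<Longrightarrow> norm y = 1 \<Longrightarrow> y \<bullet> (M *v y) \<le> x0 \<bullet> (M *v x0)"
  shows "M *v x0 = (x0 \<bullet> (M *v x0)) *\<^sub>R x0"
proof -
  define l where "l = x0 \<bullet> (M *v x0)"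
  have bound: "y \<bullet> (M *v y) \<le> l * (y \<bullet> y)" if y: "y \<in> S" for y
  proof (cases "y = 0")
    case False
    have "(y /\<^sub>R norm y) \<bullet> (M *v (y /\<^sub>R norm y)) \<le> l"
      using max[of "y /\<^sub>R norm y"] y S False by (simp add: l_def subspace_scale)
    then have "y \<bullet> (M *v y) \<le> l * (norm y)\<^sup>2"
      using False by (simp add: matrix_vector_mult_scaleR field_simps power2_eq_square)
    then show ?thesis
      by (simp add: power2_norm_eq_inner)
  qed simp
  define v where "v = l *\<^sub>R x0 - M *v x0"
  have v: "v \<in> S"
    unfolding v_def using S x0 inv by (simp add: subspace_diff subspace_scale)
  (* l |y|^2 - y \<bullet> M y is nonnegative on S and vanishes at x0, so along x0 + t v its linear
     coefficient 2 |v|^2 must vanish. *)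
  have "0 \<le> t * (2 * (v \<bullet> v)) + t\<^sup>2 * (l * (v \<bullet> v) - v \<bullet> (M *v v))" for t
  proof -
    have "x0 + t *\<^sub>R v \<in> S"
      using S x0 v by (simp add: subspace_add subspace_scale)
    then have "(x0 + t *\<^sub>R v) \<bullet> (M *v (x0 + t *\<^sub>R v)) \<le> l * ((x0 + t *\<^sub>R v) \<bullet> (x0 + t *\<^sub>R v))"
      by (rule bound)
    moreover have "x0 \<bullet> x0 = 1"
      using x0 by (simp add: norm_eq_1)
    moreover have "x0 \<bullet> (M *v v) = v \<bullet> (M *v x0)"
      using symmetric_matrix_inner[OF sym, of x0 v] by (simp add: inner_commute)
    ultimately show ?thesis
      by (simp add: v_def l_def matrix_vector_right_distrib matrix_vector_mult_scaleR inner_add_left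
          inner_add_right inner_diff_left inner_diff_right inner_commute power2_eq_square algebra_simps)
  qed
  then have "2 * (v \<bullet> v) = 0"
    by (rule quadratic_nonneg_imp_linear_coeff_zero)
  then show ?thesis
    by (simp add: v_def l_def)
qed

lemma symmetric_matrix_has_eigenvector:
  fixes M :: "real^'n^'n"
  assumes sym: "transpose M = M" and S: "subspace S" and inv: "\<And>x. x \<in> S \<Longrightarrow> M *v x \<in> S"
    and nontrivial: "x \<in> S" "x \<noteq> 0"
  obtains u c where "u \<in> S" "norm u = 1" "M *v u = c *\<^sub>R u"
proof -
  have "compact (sphere 0 1 \<inter> S)"
    by (intro compact_Int_closed compact_sphere closed_subspace S)
  moreover have "x /\<^sub>R norm x \<in> sphere 0 1 \<inter> S"
    using nontrivial S by (simp add: subspace_scale)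
  moreover have "continuous_on (sphere 0 1 \<inter> S) (\<lambda>y. y \<bullet> (M *v y))"
    by (intro continuous_intros linear_continuous_on matrix_vector_mul_bounded_linear)
  ultimately obtain u where "u \<in> sphere 0 1 \<inter> S"
    and "\<And>y. y \<in> sphere 0 1 \<inter> S \<Longrightarrow> y \<bullet> (M *v y) \<le> u \<bullet> (M *v u)"
    using continuous_attains_sup[of "sphere 0 1 \<inter> S"] by blast
  then show ?thesis
    using that maximiser_of_quadratic_form_is_eigenvector[OF sym S inv, of u] by auto
qed

lemma eigenvector_orthogonal_complement_invariant:
  fixes M :: "real^'n^'n"
  assumes sym: "transpose M = M" and u: "M *v u = c *\<^sub>R u"
    and inv: "\<And>x. x \<in> S \<Longrightarrow> M *v x \<in> S" and y: "y \<in> S" "u \<bullet> y = 0"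
  shows "M *v y \<in> S \<and> u \<bullet> (M *v y) = 0"
  using inv[OF y(1)] y(2) by (simp add: symmetric_matrix_inner[OF sym] u)

lemma subspace_subset_span_insert_orthogonal:
  fixes u :: "'a::real_inner"
  assumes S: "subspace S" and u: "u \<in> S" "u \<bullet> u = 1" and E: "S \<inter> {y. u \<bullet> y = 0} \<subseteq> span E"
  shows "S \<subseteq> span (insert u E)"
proof
  fix y
  assume y: "y \<in> S"
  have "y - (u \<bullet> y) *\<^sub>R u \<in> S \<inter> {y. u \<bullet> y = 0}"
    using y u S by (simp add: subspace_diff subspace_scale inner_diff_right)
  then have "y - (u \<bullet> y) *\<^sub>R u \<in> span (insert u E)"
    using E span_mono[of E "insert u E"] by blast
  then have "y - (u \<bullet> y) *\<^sub>R u + (u \<bullet> y) *\<^sub>R u \<in> span (insert u E)"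
    by (rule span_add[OF _ span_scale[OF span_base]]) simp
  then show "y \<in> span (insert u E)"
    by simp
qed

definition orthonormal_family :: "('i \<Rightarrow> 'a::real_inner) \<Rightarrow> bool" where
  "orthonormal_family u \<longleftrightarrow> (\<forall>i j. u i \<bullet> u j = (if i = j then 1 else 0))"

definition orthonormal_eigenbasis :: "real^'n^'n \<Rightarrow> ('n \<Rightarrow> real^'n) \<Rightarrow> ('n \<Rightarrow> real) \<Rightarrow> bool" where
  "orthonormal_eigenbasis M u l \<longleftrightarrow> orthonormal_family u \<and> (\<forall>i. M *v u i = l i *\<^sub>R u i)"

lemma symmetric_matrix_orthonormal_eigenvectors_spanning:
  fixes M :: "real^'n^'n"
  assumes sym: "transpose M = M"
  shows "subspace S \<Longrightarrow> (\<And>x. x \<in> S \<Longrightarrow> M *v x \<in> S) \<Longrightarrow>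
    \<exists>E. E \<subseteq> S \<and> pairwise orthogonal E \<and> (\<forall>x\<in>E. norm x = 1 \<and> (\<exists>c. M *v x = c *\<^sub>R x))
      \<and> S \<subseteq> span E"
proof (induction "dim S" arbitrary: S rule: less_induct)
  case less
  show ?case
  proof (cases "S \<subseteq> {0}")
    case True
    then show ?thesis
      by (intro exI[of _ "{}"]) auto
  next
    case False
    then obtain x where "x \<in> S" "x \<noteq> 0"
      by blast
    then obtain u c where u: "u \<in> S" "norm u = 1" "M *v u = c *\<^sub>R u"
      using symmetric_matrix_has_eigenvector[OF sym less.prems] by blast
    have uu: "u \<bullet> u = 1"
      using u(2) by (simp add: norm_eq_1)
    define S' where "S' = S \<inter> {y. u \<bullet> y = 0}"
    have S': "subspace S'"
      unfolding S'_def by (intro subspace_inter less.prems(1) subspace_hyperplane)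
    have inv': "M *v y \<in> S'" if "y \<in> S'" for y
      using eigenvector_orthogonal_complement_invariant[OF sym u(3) less.prems(2)] that
      by (simp add: S'_def)
    have "u \<notin> S'"
      using uu by (simp add: S'_def)
    then have "S' \<subset> S"
      using u(1) unfolding S'_def by blast
    then have "dim S' < dim S"
      using S' less.prems(1) by (metis dim_psubset span_eq_iff)
    then obtain E where E: "E \<subseteq> S'" "pairwise orthogonal E"
        "\<forall>x\<in>E. norm x = 1 \<and> (\<exists>c. M *v x = c *\<^sub>R x)" "S' \<subseteq> span E"
      using less.hyps[OF _ S' inv'] by blast
    have "S \<subseteq> span (insert u E)"
      using subspace_subset_span_insert_orthogonal[OF less.prems(1) u(1) uu] E(4)
      by (simp add: S'_def)
    moreover have "pairwise orthogonal (insert u E)"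
      using E(1,2) by (auto simp: pairwise_insert S'_def orthogonal_def inner_commute)
    ultimately show ?thesis
      using E(1,3) u by (intro exI[of _ "insert u E"]) (auto simp: S'_def)
  qed
qed

lemma symmetric_matrix_orthonormal_eigenbasis:
  fixes M :: "real^'n^'n"
  assumes sym: "transpose M = M"
  obtains u l where "orthonormal_eigenbasis M u l"
proof -
  obtain E where E: "pairwise orthogonal E" "\<forall>x\<in>E. norm x = 1 \<and> (\<exists>c. M *v x = c *\<^sub>R x)"
    "UNIV \<subseteq> span E"
    using symmetric_matrix_orthonormal_eigenvectors_spanning[OF sym subspace_UNIV] by auto
  have "independent E"
    using E(1,2) by (intro pairwise_orthogonal_independent) auto
  then have "card E = CARD('n)" "finite E"
    using E(3) basis_card_eq_dim[of E UNIV] finiteI_independent by auto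
  then obtain u where u: "bij_betw u (UNIV :: 'n set) E"
    by (metis finite_same_card_bij finite_class.finite_UNIV)
  then have "\<forall>i. \<exists>c. M *v u i = c *\<^sub>R u i"
    using E(2) by (auto simp: bij_betw_def)
  then obtain l where "\<forall>i. M *v u i = l i *\<^sub>R u i"
    by metis
  moreover have "orthonormal_family u"
    using u E(1,2) unfolding orthonormal_family_def
    by (auto simp: bij_betw_def inj_on_def pairwise_def orthogonal_def norm_eq_1) metis
  ultimately show ?thesis
    using that orthonormal_eigenbasis_def by blast
qed

section \<open>Sorted eigenvalues and their monotonicity\<close>

definition poly_mat :: "real^'n^'m \<Rightarrow> real poly^'n^'m" where
  "poly_mat A = (\<chi> i j. [:A $ i $ j:])"

lemma sum_pCons_const: "(\<Sum>i\<in>S. [:f i :: real:]) = [:sum f S:]"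
  by (induction S rule: infinite_finite_induct) auto

lemma poly_mat_mult: "poly_mat (A ** B) = poly_mat A ** poly_mat B"
  by (simp add: poly_mat_def matrix_matrix_mult_def vec_eq_iff sum_pCons_const mult.commute)

lemma matrix_diff_ldistrib: "A ** (B - C) = A ** B - A ** (C :: 'a::ring_1^'n^'m)"
  by (simp add: matrix_matrix_mult_def vec_eq_iff right_diff_distrib sum_subtractf)

lemma matrix_diff_rdistrib: "(A - B) ** C = A ** C - B ** (C :: 'a::ring_1^'n^'m)"
  by (simp add: matrix_matrix_mult_def vec_eq_iff left_diff_distrib sum_subtractf)

lemma poly_mat_one: "poly_mat (mat 1) = mat 1"
  by (simp add: poly_mat_def mat_def vec_eq_iff)

lemma charpoly_poly_mat: "charpoly M = det (mat [:0, 1:] - poly_mat M)"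
  by (simp add: charpoly_def poly_mat_def mat_def)

lemma charpoly_similar:
  fixes M D :: "real^'n^'n"
  assumes inv: "P ** Q = mat 1" and conj: "M ** Q = Q ** D"
  shows "charpoly M = charpoly D"
proof -
  let ?X = "mat [:0, 1:] :: real poly^'n^'n"
  have X: "?X ** poly_mat Q = poly_mat Q ** ?X"
    by (simp add: vec_eq_iff matrix_matrix_mult_def mat_def if_distrib[of "\<lambda>x. x * _"]
        if_distrib[of "\<lambda>x. _ * x"] mult.commute cong: if_cong)
  have "(?X - poly_mat M) ** poly_mat Q = poly_mat Q ** (?X - poly_mat D)"
    by (simp add: matrix_diff_rdistrib matrix_diff_ldistrib X flip: poly_mat_mult conj)
  then have "charpoly M * det (poly_mat Q) = det (poly_mat Q) * charpoly D"
    by (metis charpoly_poly_mat det_mul)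
  moreover have "det (poly_mat P) * det (poly_mat Q) = 1"
    by (metis inv poly_mat_mult poly_mat_one det_mul det_I)
  ultimately show ?thesis
    by (metis mult.commute mult_cancel_left mult_zero_left zero_neq_one)
qed

lemma charpoly_diagonal:
  "charpoly (\<chi> i j. if i = j then l i else 0 :: real^'n^'n) = (\<Prod>i\<in>UNIV. [:- l i, 1:])"
  unfolding charpoly_def by (subst det_diagonal) (auto simp: vec_eq_iff)

lemma charpoly_orthonormal_eigenbasis:
  fixes M :: "real^'n^'n"
  assumes "orthonormal_eigenbasis M u l"
  shows "charpoly M = (\<Prod>i\<in>UNIV. [:- l i, 1:])"
proof -
  define Q :: "real^'n^'n" where "Q = (\<chi> i j. u j $ i)"
  have "(\<Sum>k\<in>UNIV. u i $ k * u j $ k) = (if i = j then 1 else 0)" for i j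
    using assms unfolding orthonormal_eigenbasis_def orthonormal_family_def inner_vec_def by simp
  then have "transpose Q ** Q = mat 1"
    by (simp add: vec_eq_iff Q_def transpose_def matrix_matrix_mult_def mat_def)
  moreover have "M ** Q = Q ** (\<chi> i j. if i = j then l i else 0)"
  proof -
    have "(M *v u j) $ i = l j * u j $ i" for i j
      using assms by (simp add: orthonormal_eigenbasis_def)
    moreover have "(\<Sum>k\<in>UNIV. u k $ i * (if k = j then l k else 0))
        = (\<Sum>k\<in>UNIV. if k = j then l j * u j $ i else 0)" for i j
      by (rule sum.cong) auto
    ultimately show ?thesis
      by (simp add: vec_eq_iff Q_def matrix_matrix_mult_def matrix_vector_mult_def mult.commute)
  qed
  ultimately show ?thesis
    by (simp add: charpoly_similar charpoly_diagonal)
qed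

lemma order_prod_linear_factors:
  "order a (\<Prod>x\<leftarrow>xs. [:- x, 1:]) = count (mset xs) (a :: 'a::idom)"
proof (induction xs)
  case (Cons x xs)
  have "order a [:- x, 1:] = (if a = x then 1 else 0)"
    using order_power_n_n[of x 1] by (auto intro: order_0I)
  moreover have "(\<Prod>y\<leftarrow>x # xs. [:- y, 1:]) \<noteq> 0"
    by (subst prod_list_zero_iff) auto
  ultimately show ?case
    using Cons order_mult[of "[:- x, 1:]" "\<Prod>y\<leftarrow>xs. [:- y, 1:]" a] by simp
qed simp

lemma prod_linear_factors_eq_imp_mset_eq:
  "(\<Prod>x\<leftarrow>xs. [:- x, 1:]) = (\<Prod>x\<leftarrow>ys. [:- x, 1 :: 'a::idom:]) \<Longrightarrow> mset xs = mset ys"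
  by (metis multiset_eqI order_prod_linear_factors)

lemma eigenvalues_asc_orthonormal_eigenbasis:
  fixes M :: "real^'n^'n"
  assumes "orthonormal_eigenbasis M u l"
  obtains es where "distinct es" "set es = UNIV" "sorted (map l es)" "eigenvalues_asc M = map l es"
proof -
  obtain xs where xs: "set xs = (UNIV :: 'n set)" "distinct xs"
    using finite_distinct_list[OF finite_class.finite_UNIV] by blast
  define es where "es = sort_key l xs"
  have es: "distinct es" "set es = UNIV" "sorted (map l es)" "length es = CARD('n)"
    using xs distinct_card[of xs] by (simp_all add: es_def)
  have "charpoly M = (\<Prod>i\<in>set es. [:- l i, 1:])"
    using charpoly_orthonormal_eigenbasis[OF assms] es(2) by simp
  also have "\<dots> = (\<Prod>x\<leftarrow>map l es. [:- x, 1:])"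
    by (simp add: prod.distinct_set_conv_list[OF es(1)] o_def)
  finally have cp: "charpoly M = (\<Prod>x\<leftarrow>map l es. [:- x, 1:])" .
  have "eigenvalues_asc M = map l es"
    unfolding eigenvalues_asc_def
  proof (rule the_equality[rotated])
    fix ys
    assume "sorted ys \<and> length ys = CARD('n) \<and> charpoly M = (\<Prod>x\<leftarrow>ys. [:- x, 1:])"
    then have "sorted ys" "(\<Prod>x\<leftarrow>ys. [:- x, 1:]) = (\<Prod>x\<leftarrow>map l es. [:- x, 1:])"
      using cp by auto
    then have "sorted ys" "mset ys = mset (map l es)"
      using prod_linear_factors_eq_imp_mset_eq by blast+
    then show "ys = map l es"
      using es(3) by (metis properties_for_sort sorted_sort_id)
  next
    show "sorted (map l es) \<and> length (map l es) = CARD('n) \<and> charpoly M = (\<Prod>x\<leftarrow>map l es. [:- x, 1:])"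
      using es(3,4) cp by simp
  qed
  then show ?thesis
    using that es by blast
qed

lemma orthonormal_family_inj: "orthonormal_family u \<Longrightarrow> inj u"
  unfolding orthonormal_family_def by (metis injI zero_neq_one)

lemma orthonormal_family_independent:
  "orthonormal_family u \<Longrightarrow> independent (u ` J)"
  unfolding orthonormal_family_def
  by (intro pairwise_orthogonal_independent)
    (auto simp: pairwise_def orthogonal_def, metis zero_neq_one inner_zero_left)

lemma dim_image_orthonormal_family:
  "orthonormal_family u \<Longrightarrow> dim (u ` J) = card J"
  by (simp add: dim_eq_card_independent orthonormal_family_independent card_image
      inj_on_subset[OF orthonormal_family_inj])

lemma orthonormal_family_expansion:
  fixes u :: "'i::finite \<Rightarrow> 'a::real_inner"
  assumes u: "orthonormal_family u" and x: "x \<in> span (u ` J)"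
  shows "x = (\<Sum>j\<in>J. (x \<bullet> u j) *\<^sub>R u j)"
proof -
  obtain c where c: "x = (\<Sum>j\<in>J. c j *\<^sub>R u j)"
    using x span_finite[of "u ` J"] inj_on_subset[OF orthonormal_family_inj[OF u]]
    by (auto simp: sum.reindex)
  have "x \<bullet> u k = c k" if "k \<in> J" for k
  proof -
    have "x \<bullet> u k = (\<Sum>j\<in>J. c j * (u j \<bullet> u k))"
      unfolding c by (simp add: inner_sum_left)
    also have "\<dots> = (\<Sum>j\<in>J. if j = k then c j else 0)"
      using u unfolding orthonormal_family_def by (intro sum.cong) auto
    finally show ?thesis
      using that by simp
  qed
  then show ?thesis
    using c by simp
qed

lemma orthonormal_eigenbasis_quadratic_form:
  fixes M :: "real^'n^'n"
  assumes M: "orthonormal_eigenbasis M u l" and x: "x \<in> span (u ` J)"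
  shows "x \<bullet> (M *v x) = (\<Sum>j\<in>J. l j * (x \<bullet> u j)\<^sup>2)" and "x \<bullet> x = (\<Sum>j\<in>J. (x \<bullet> u j)\<^sup>2)"
proof -
  have u: "orthonormal_family u" and eig: "\<And>j. M *v u j = l j *\<^sub>R u j"
    using M by (auto simp: orthonormal_eigenbasis_def)
  have x_eq: "x = (\<Sum>j\<in>J. (x \<bullet> u j) *\<^sub>R u j)"
    by (rule orthonormal_family_expansion[OF u x])
  have "M *v x = (\<Sum>j\<in>J. (l j * (x \<bullet> u j)) *\<^sub>R u j)"
    by (subst x_eq) (simp add: vec.sum matrix_vector_mult_scaleR eig mult.commute)
  then show "x \<bullet> (M *v x) = (\<Sum>j\<in>J. l j * (x \<bullet> u j)\<^sup>2)"
    by (simp add: inner_sum_right power2_eq_square mult_ac)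
  show "x \<bullet> x = (\<Sum>j\<in>J. (x \<bullet> u j)\<^sup>2)"
    by (subst (2) x_eq) (simp add: inner_sum_right power2_eq_square)
qed

lemma quadratic_form_lower_bound_on_eigenspan:
  fixes M :: "real^'n^'n"
  assumes M: "orthonormal_eigenbasis M u l" and x: "x \<in> span (u ` J)"
    and bound: "\<And>j. j \<in> J \<Longrightarrow> c \<le> l j"
  shows "c * (x \<bullet> x) \<le> x \<bullet> (M *v x)"
proof -
  have "c * (x \<bullet> x) = (\<Sum>j\<in>J. c * (x \<bullet> u j)\<^sup>2)"
    by (simp add: orthonormal_eigenbasis_quadratic_form(2)[OF M x] sum_distrib_left)
  also have "\<dots> \<le> (\<Sum>j\<in>J. l j * (x \<bullet> u j)\<^sup>2)"
    by (intro sum_mono mult_right_mono bound) auto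
  finally show ?thesis
    by (simp add: orthonormal_eigenbasis_quadratic_form(1)[OF M x])
qed

lemma quadratic_form_upper_bound_on_eigenspan:
  fixes M :: "real^'n^'n"
  assumes M: "orthonormal_eigenbasis M u l" and x: "x \<in> span (u ` J)"
    and bound: "\<And>j. j \<in> J \<Longrightarrow> l j \<le> c"
  shows "x \<bullet> (M *v x) \<le> c * (x \<bullet> x)"
proof -
  have "x \<bullet> (M *v x) = (\<Sum>j\<in>J. l j * (x \<bullet> u j)\<^sup>2)"
    by (rule orthonormal_eigenbasis_quadratic_form(1)[OF M x])
  also have "\<dots> \<le> (\<Sum>j\<in>J. c * (x \<bullet> u j)\<^sup>2)"
    by (intro sum_mono mult_right_mono bound) auto
  finally show ?thesis
    by (simp add: orthonormal_eigenbasis_quadratic_form(2)[OF M x] sum_distrib_left)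
qed

lemma subspaces_share_nonzero_vector:
  fixes U V :: "'a::euclidean_space set"
  assumes U: "subspace U" and V: "subspace V" and dim: "DIM('a) < dim U + dim V"
  obtains x where "x \<in> U" "x \<in> V" "x \<noteq> 0"
proof -
  have "dim {x + y |x y. x \<in> U \<and> y \<in> V} + dim (U \<inter> V) = dim U + dim V"
    by (rule dim_sums_Int[OF U V])
  moreover have "dim {x + y |x y. x \<in> U \<and> y \<in> V} \<le> DIM('a)"
    by (rule dim_subset_UNIV)
  ultimately have "\<not> U \<inter> V \<subseteq> {0}"
    using dim dim_eq_0[of "U \<inter> V"] by linarith
  then show ?thesis
    using that by blast
qed

lemma sorted_map_nth_le_drop:
  assumes "sorted (map f xs)" "y \<in> set (drop i xs)"
  shows "f (xs ! i) \<le> f y"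
proof -
  obtain p where "p < length (drop i xs)" "y = drop i xs ! p"
    using assms(2) in_set_conv_nth by metis
  then have p: "i + p < length xs" "y = xs ! (i + p)"
    by auto
  then show ?thesis
    using sorted_nth_mono[OF assms(1), of i "i + p"] by simp
qed

lemma sorted_map_take_le_nth:
  assumes "sorted (map f xs)" "i < length xs" "y \<in> set (take (Suc i) xs)"
  shows "f y \<le> f (xs ! i)"
proof -
  obtain p where "p < length (take (Suc i) xs)" "y = take (Suc i) xs ! p"
    using assms(3) in_set_conv_nth by metis
  then have p: "p \<le> i" "y = xs ! p"
    by auto
  then show ?thesis
    using sorted_nth_mono[OF assms(1), of p i] assms(2) by simp
qed

lemma eigenvalues_asc_mono:
  fixes M N :: "real^'n^'n"
  assumes symM: "transpose M = M" and symN: "transpose N = N"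
    and le: "\<And>x. x \<bullet> (M *v x) \<le> x \<bullet> (N *v x)" and i: "i < CARD('n)"
  shows "eigenvalues_asc M ! i \<le> eigenvalues_asc N ! i"
proof -
  obtain uM lM where M: "orthonormal_eigenbasis M uM lM"
    using symmetric_matrix_orthonormal_eigenbasis[OF symM] .
  obtain esM where esM: "distinct esM" "set esM = UNIV" "sorted (map lM esM)"
      "eigenvalues_asc M = map lM esM"
    using eigenvalues_asc_orthonormal_eigenbasis[OF M] .
  obtain uN lN where N: "orthonormal_eigenbasis N uN lN"
    using symmetric_matrix_orthonormal_eigenbasis[OF symN] .
  obtain esN where esN: "distinct esN" "set esN = UNIV" "sorted (map lN esN)"
      "eigenvalues_asc N = map lN esN"
    using eigenvalues_asc_orthonormal_eigenbasis[OF N] .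
  have len: "length esM = CARD('n)" "length esN = CARD('n)"
    using esM(1,2) esN(1,2) distinct_card by fastforce+
  define U where "U = span (uM ` set (drop i esM))"
  define V where "V = span (uN ` set (take (Suc i) esN))"
  have "dim U = CARD('n) - i" "dim V = Suc i"
    using M N esM(1) esN(1) len i
    by (simp_all add: U_def V_def orthonormal_eigenbasis_def dim_image_orthonormal_family distinct_card)
  then obtain x where x: "x \<in> U" "x \<in> V" "x \<noteq> 0"
    using subspaces_share_nonzero_vector[of U V] i by (auto simp: U_def V_def)
  have "lM (esM ! i) * (x \<bullet> x) \<le> x \<bullet> (M *v x)"
    using quadratic_form_lower_bound_on_eigenspan[OF M x(1)[unfolded U_def]]
      sorted_map_nth_le_drop[OF esM(3)] by blast
  also have "\<dots> \<le> x \<bullet> (N *v x)"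
    by (rule le)
  also have "\<dots> \<le> lN (esN ! i) * (x \<bullet> x)"
    using quadratic_form_upper_bound_on_eigenspan[OF N x(2)[unfolded V_def]]
      sorted_map_take_le_nth[OF esN(3)] i len by simp
  finally have "lM (esM ! i) \<le> lN (esN ! i)"
    using x(3) by simp
  then show ?thesis
    using esM(4) esN(4) i len by simp
qed

section \<open>The truncated Laplacian\<close>

definition words_upto :: "nat \<Rightarrow> 'v list set" where
  "words_upto k = {w. length w \<le> k}"

lemma finite_words_upto: "finite (words_upto k :: 'v::finite list set)"
  using finite_lists_length_le[of "UNIV :: 'v set" k] by (simp add: words_upto_def)

lemma words_upto_mono: "k \<le> l \<Longrightarrow> words_upto k \<subseteq> words_upto l"
  by (auto simp: words_upto_def)

lemma tensor_inner_trunc: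
  "tensor_inner (trunc k s) t = (\<Sum>w\<in>words_upto k. s w * (t :: 'v::finite tensor) w)"
proof -
  have "tensor_inner (trunc k s) t = infsum (\<lambda>w. s w * t w) (words_upto k)"
    unfolding tensor_inner_def
    by (rule infsum_cong_neutral) (auto simp: trunc_def words_upto_def)
  then show ?thesis
    by (simp add: finite_words_upto)
qed

context
  fixes A B :: "'e::finite \<Rightarrow> 'v::finite tensor"
begin

lemma bdry_axis: "bdry A B (axis e 1) w = B e w - A e w"
proof -
  have "bdry A B (axis e 1) w = (\<Sum>f\<in>UNIV. if f = e then B f w - A f w else 0)"
    unfolding bdry_def by (rule sum.cong) (auto simp: axis_def)
  then show ?thesis
    by simp
qed

lemma Lmat_entry:
  "Lmat A B k $ i $ j = (\<Sum>w\<in>words_upto k. (B i w - A i w) * (B j w - A j w))"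
proof -
  have "Lmat A B k $ i $ j
      = tensor_inner (trunc k (bdry A B (axis i 1))) (trunc k (bdry A B (axis j 1)))"
    by (simp add: Lmat_def matrix_def Lop_def tensor_adjoint_def)
  then show ?thesis
    unfolding tensor_inner_trunc
    by (simp add: trunc_def words_upto_def bdry_axis)
qed

lemma Lmat_symmetric: "transpose (Lmat A B k) = Lmat A B k"
  by (simp add: vec_eq_iff transpose_def Lmat_entry mult.commute)

lemma Lmat_mult_vector:
  "(Lmat A B k *v x) $ i = (\<Sum>w\<in>words_upto k. (B i w - A i w) * bdry A B x w)"
proof -
  have "(Lmat A B k *v x) $ i
      = (\<Sum>j\<in>UNIV. \<Sum>w\<in>words_upto k. (B i w - A i w) * (x $ j * (B j w - A j w)))"
    by (simp add: matrix_vector_mult_def Lmat_entry sum_distrib_left sum_distrib_right mult_ac)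
  then show ?thesis
    by (simp add: bdry_def sum_distrib_left sum.swap[of _ UNIV])
qed

lemma Lmat_quadratic_form:
  "x \<bullet> (Lmat A B k *v x) = (\<Sum>w\<in>words_upto k. (bdry A B x w)\<^sup>2)"
proof -
  have "x \<bullet> (Lmat A B k *v x)
      = (\<Sum>i\<in>UNIV. \<Sum>w\<in>words_upto k. x $ i * (B i w - A i w) * bdry A B x w)"
    by (simp add: inner_vec_def Lmat_mult_vector sum_distrib_left mult_ac)
  then show ?thesis
    by (simp add: bdry_def power2_eq_square sum_distrib_right sum.swap[of _ UNIV])
qed

lemma Lmat_psd: "0 \<le> x \<bullet> (Lmat A B k *v x)"
  by (simp add: Lmat_quadratic_form sum_nonneg)

lemma Lmat_mono: "k \<le> l \<Longrightarrow> x \<bullet> (Lmat A B k *v x) \<le> x \<bullet> (Lmat A B l *v x)"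
  unfolding Lmat_quadratic_form
  by (rule sum_mono2[OF finite_words_upto words_upto_mono]) auto

lemma Zk_iff: "x \<in> Zk A B k \<longleftrightarrow> (\<forall>w\<in>words_upto k. bdry A B x w = 0)"
  by (auto simp: Zk_def trunc_def words_upto_def fun_eq_iff)

lemma Lmat_kernel: "{x. Lmat A B k *v x = 0} = Zk A B k"
proof (intro set_eqI iffI; simp)
  fix x
  assume "Lmat A B k *v x = 0"
  then have "(\<Sum>w\<in>words_upto k. (bdry A B x w)\<^sup>2) = 0"
    by (simp flip: Lmat_quadratic_form)
  then show "x \<in> Zk A B k"
    by (simp add: Zk_iff sum_nonneg_eq_0_iff[OF finite_words_upto])
next
  fix x
  assume "x \<in> Zk A B k"
  then show "Lmat A B k *v x = 0"
    by (simp add: Zk_iff vec_eq_iff Lmat_mult_vector)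
qed

end

section \<open>Rank of the macrograph incidence map\<close>

interpretation funspace: vector_space "\<lambda>(r::real) (f::'a \<Rightarrow> real) v. r * f v"
  by unfold_locales (auto simp: fun_eq_iff algebra_simps)

(* The rewrites make the domain side of rank-nullity speak of the usual subspace and dim. *)
interpretation eucl_funspace: finite_dimensional_vector_space_pair_1
  "scaleR :: real \<Rightarrow> 'a::euclidean_space \<Rightarrow> 'a" Basis "\<lambda>(r::real) (f::'b \<Rightarrow> real) v. r * f v"
  rewrites "module.subspace (scaleR :: real \<Rightarrow> 'a \<Rightarrow> 'a) = subspace"
    and "vector_space.dim (scaleR :: real \<Rightarrow> 'a \<Rightarrow> 'a) = dim"
  by unfold_locales (simp_all add: subspace_raw_def dim_raw_def)

lemma sum_fun_apply: "(\<Sum>a\<in>A. f a) x = (\<Sum>a\<in>A. f a x)"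
  by (induction A rule: infinite_finite_induct) auto

lemma sum_indicator_singleton:
  "finite C \<Longrightarrow> (\<Sum>v\<in>C. indicator {a} v :: real) = (if a \<in> C then 1 else 0)"
  by (simp add: indicator_def of_bool_def)

lemma inj_indicator_singleton: "inj (\<lambda>a. indicator {a} :: 'a \<Rightarrow> real)"
  by (rule injI) (metis indicator_simps(1) indicator_simps(2) insertI1 singletonD zero_neq_one)

lemma funspace_independent_indicators:
  "funspace.independent ((\<lambda>a. indicator {a} :: 'a \<Rightarrow> real) ` X)"
proof
  assume "funspace.dependent ((\<lambda>a. indicator {a} :: 'a \<Rightarrow> real) ` X)"
  then obtain a where a: "indicator {a} \<in> funspace.span ((\<lambda>b. indicator {b}) ` X - {indicator {a}})"
    unfolding funspace.dependent_def by blast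
  have "indicator {a} \<in> {g :: 'a \<Rightarrow> real. g a = 0}"
    using a
  proof (rule funspace.span_subspace_induct)
    show "funspace.subspace {g :: 'a \<Rightarrow> real. g a = 0}"
      by (simp add: funspace.subspace_def)
  qed (auto simp: indicator_def)
  then show False
    by simp
qed

lemma funspace_span_indicators:
  assumes "finite V"
  shows "funspace.span ((\<lambda>a. indicator {a}) ` V) = {g :: 'a \<Rightarrow> real. \<forall>v. v \<notin> V \<longrightarrow> g v = 0}"
proof
  show "funspace.span ((\<lambda>a. indicator {a}) ` V) \<subseteq> {g. \<forall>v. v \<notin> V \<longrightarrow> g v = 0}"
    by (rule funspace.span_minimal) (auto simp: funspace.subspace_def indicator_def)
  show "{g. \<forall>v. v \<notin> V \<longrightarrow> g v = 0} \<subseteq> funspace.span ((\<lambda>a. indicator {a}) ` V)"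
  proof
    fix g :: "'a \<Rightarrow> real"
    assume g: "g \<in> {g. \<forall>v. v \<notin> V \<longrightarrow> g v = 0}"
    have "g = (\<Sum>a\<in>V. (\<lambda>v. g a * indicator {a} v))"
      using assms g by (auto simp: fun_eq_iff sum_fun_apply indicator_def Int_insert_right)
    also have "\<dots> \<in> funspace.span ((\<lambda>a. indicator {a}) ` V)"
      by (intro funspace.span_sum funspace.span_scale funspace.span_base) auto
    finally show "g \<in> funspace.span ((\<lambda>a. indicator {a}) ` V)" .
  qed
qed

lemma funspace_dim_supported:
  assumes "finite V"
  shows "funspace.dim {g :: 'a \<Rightarrow> real. \<forall>v. v \<notin> V \<longrightarrow> g v = 0} = card V"
  using funspace.dim_span_eq_card_independent[OF funspace_independent_indicators, of V]
  by (simp add: funspace_span_indicators[OF assms] card_image inj_on_subset[OF inj_indicator_singleton])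

abbreviation macro_conn :: "('e \<Rightarrow> 'v tensor) \<Rightarrow> ('e \<Rightarrow> 'v tensor) \<Rightarrow> ('v tensor \<times> 'v tensor) set" where
  "macro_conn A B \<equiv> (macro_edges A B \<union> (macro_edges A B)\<inverse>)\<^sup>*"

context
  fixes A B :: "'e::finite \<Rightarrow> 'v tensor"
begin

lemma finite_Vmacro: "finite (Vmacro A B)"
  by (simp add: Vmacro_def)

lemma equiv_macro_conn: "equiv UNIV (macro_conn A B)"
  by (simp add: equiv_def refl_rtrancl sym_rtrancl sym_Un_converse trans_rtrancl)

lemma macro_conn_closed: "(a, b) \<in> macro_conn A B \<Longrightarrow> a \<in> Vmacro A B \<Longrightarrow> b \<in> Vmacro A B"
  by (induction rule: rtrancl_induct) (auto simp: macro_edges_def Vmacro_def)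

lemma macro_class_subset: "C \<in> Vmacro A B // macro_conn A B \<Longrightarrow> C \<subseteq> Vmacro A B"
  using macro_conn_closed by (auto simp: quotient_def)

lemma finite_macro_classes: "finite (Vmacro A B // macro_conn A B)"
  using finite_Vmacro by (auto simp: quotient_def)

lemma sum_indicator_macro_class:
  assumes "C \<in> Vmacro A B // macro_conn A B" "D \<in> Vmacro A B // macro_conn A B" "d \<in> D"
  shows "(\<Sum>w\<in>C. indicator {d} w :: real) = (if C = D then 1 else 0)"
proof -
  have "C \<in> UNIV // macro_conn A B" "D \<in> UNIV // macro_conn A B"
    using assms(1,2) by (auto simp: quotient_def)
  then have "d \<in> C \<longleftrightarrow> C = D"
    using quotient_disj[OF equiv_macro_conn] assms(3) by blast
  then show ?thesis
    using finite_subset[OF macro_class_subset[OF assms(1)] finite_Vmacro]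
    by (simp add: sum_indicator_singleton)
qed

lemma Bmacro_axis: "Bmacro A B (axis e 1) = indicator {B e} - indicator {A e}"
proof
  fix v
  have "Bmacro A B (axis e 1) v
      = (\<Sum>f\<in>UNIV. if f = e then indicator {B f} v - indicator {A f} v else 0)"
    unfolding Bmacro_def by (rule sum.cong) (auto simp: axis_def)
  then show "Bmacro A B (axis e 1) v = (indicator {B e} - indicator {A e}) v"
    by simp
qed

lemma linear_Bmacro: "Vector_Spaces.linear scaleR (\<lambda>(r::real) f v. r * f v) (Bmacro A B)"
  unfolding Vector_Spaces.linear_iff
  by (simp add: funspace.vector_space_axioms real_vector.vector_space_axioms Bmacro_def fun_eq_iff
      distrib_right sum.distrib sum_distrib_left mult.assoc)

lemma subspace_range_Bmacro: "funspace.subspace (range (Bmacro A B))"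
  using eucl_funspace.linear_subspace_image[OF linear_Bmacro subspace_UNIV] .

lemma Bmacro_support: "v \<notin> Vmacro A B \<Longrightarrow> Bmacro A B x v = 0"
  by (auto simp: Bmacro_def Vmacro_def indicator_def intro!: sum.neutral)

lemma indicator_diff_in_range_Bmacro:
  "(a, b) \<in> macro_conn A B \<Longrightarrow> indicator {b} - indicator {a} \<in> range (Bmacro A B)"
proof (induction rule: rtrancl_induct)
  case base
  then show ?case
    using funspace.subspace_0[OF subspace_range_Bmacro] by (simp add: zero_fun_def)
next
  case (step y z)
  have "indicator {z} - indicator {y} \<in> range (Bmacro A B)"
  proof (cases "(y, z) \<in> macro_edges A B")
    case True
    then show ?thesis
      by (auto simp: macro_edges_def simp flip: Bmacro_axis)
  next
    case False
    then obtain e where "y = B e" "z = A e"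
      using step(2) by (auto simp: macro_edges_def)
    then have "indicator {z} - indicator {y} = - Bmacro A B (axis e 1)"
      by (simp add: Bmacro_axis)
    then show ?thesis
      using funspace.subspace_neg[OF subspace_range_Bmacro, of "Bmacro A B (axis e 1)"] by simp
  qed
  then have "(indicator {y} - indicator {a}) + (indicator {z} - indicator {y}) \<in> range (Bmacro A B)"
    using funspace.subspace_add[OF subspace_range_Bmacro] step(3) by blast
  then show ?case
    by (simp add: fun_diff_def plus_fun_def)
qed

lemma Bmacro_sum_over_class:
  assumes C: "C \<in> Vmacro A B // macro_conn A B"
  shows "(\<Sum>v\<in>C. Bmacro A B x v) = 0"
proof -
  have "C \<in> UNIV // macro_conn A B"
    using C by (auto simp: quotient_def)
  moreover have "(A e, B e) \<in> macro_conn A B" "(B e, A e) \<in> macro_conn A B" for e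
    by (auto simp: macro_edges_def intro: r_into_rtrancl)
  ultimately have ends: "A e \<in> C \<longleftrightarrow> B e \<in> C" for e
    using in_quotient_imp_closed[OF equiv_macro_conn] by blast
  have "(\<Sum>v\<in>C. Bmacro A B x v)
      = (\<Sum>e\<in>UNIV. x $ e * ((\<Sum>v\<in>C. indicator {B e} v) - (\<Sum>v\<in>C. indicator {A e} v)))"
    unfolding Bmacro_def by (subst sum.swap) (simp add: right_diff_distrib sum_subtractf sum_distrib_left)
  also have "\<dots> = 0"
    using ends finite_subset[OF macro_class_subset[OF C] finite_Vmacro]
    by (simp add: sum_indicator_singleton)
  finally show ?thesis .
qed

lemma phi_hat_Bmacro: "phi_hat A B (Bmacro A B x) = bdry A B x"
proof
  fix w
  have eval: "(\<Sum>v\<in>Vmacro A B. indicator {a} v * v w) = a w" if "a \<in> Vmacro A B" for a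
  proof -
    have "(\<lambda>v. indicator {a} v * v w) = (\<lambda>v. if v = a then a w else 0)"
      by (auto simp: fun_eq_iff)
    then show ?thesis
      by (simp only: sum.delta[OF finite_Vmacro] that if_True)
  qed
  have "phi_hat A B (Bmacro A B x) w
      = (\<Sum>e\<in>UNIV. x $ e * ((\<Sum>v\<in>Vmacro A B. indicator {B e} v * v w)
                            - (\<Sum>v\<in>Vmacro A B. indicator {A e} v * v w)))"
    unfolding phi_hat_def Bmacro_def sum_distrib_right
    by (subst sum.swap) (simp add: sum_distrib_left sum_subtractf algebra_simps)
  moreover have "A e \<in> Vmacro A B" "B e \<in> Vmacro A B" for e
    by (auto simp: Vmacro_def)
  ultimately show "phi_hat A B (Bmacro A B x) w = bdry A B x w"
    by (simp add: eval bdry_def)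
qed

lemma inj_on_indicator_representatives:
  assumes r: "\<And>C. C \<in> Vmacro A B // macro_conn A B \<Longrightarrow> r C \<in> C"
  shows "inj_on (\<lambda>C. indicator {r C} :: 'v tensor \<Rightarrow> real) (Vmacro A B // macro_conn A B)"
proof (rule inj_onI)
  fix C D
  assume C: "C \<in> Vmacro A B // macro_conn A B" and D: "D \<in> Vmacro A B // macro_conn A B"
    and "indicator {r C} = (indicator {r D} :: 'v tensor \<Rightarrow> real)"
  then have "r C = r D"
    using inj_indicator_singleton by (metis injD)
  then have "(\<Sum>w\<in>C. indicator {r D} w :: real) = 1"
    using sum_indicator_macro_class[OF C C r[OF C]] by simp
  then show "C = D"
    using sum_indicator_macro_class[OF C D r[OF D]] by (simp split: if_splits)
qed

lemma range_Bmacro_inter_span_representatives: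
  assumes r: "\<And>C. C \<in> Vmacro A B // macro_conn A B \<Longrightarrow> r C \<in> C"
  shows "range (Bmacro A B) \<inter> funspace.span ((\<lambda>C. indicator {r C}) ` (Vmacro A B // macro_conn A B))
    \<subseteq> {0}"
proof
  let ?Q = "Vmacro A B // macro_conn A B"
  fix g
  assume g: "g \<in> range (Bmacro A B) \<inter> funspace.span ((\<lambda>C. indicator {r C}) ` ?Q)"
  then obtain u where "g = (\<Sum>h\<in>(\<lambda>C. indicator {r C}) ` ?Q. (\<lambda>v. u h * h v))"
    using funspace.span_finite[of "(\<lambda>C. indicator {r C}) ` ?Q"] finite_macro_classes by auto
  then have u: "g = (\<Sum>C\<in>?Q. (\<lambda>v. u (indicator {r C}) * indicator {r C} v))"
    by (simp add: sum.reindex[OF inj_on_indicator_representatives[OF r]])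
  have "u (indicator {r D}) = 0" if D: "D \<in> ?Q" for D
  proof -
    have "0 = (\<Sum>w\<in>D. g w)"
      using g Bmacro_sum_over_class[OF D] by auto
    also have "\<dots> = (\<Sum>C\<in>?Q. u (indicator {r C}) * (\<Sum>w\<in>D. indicator {r C} w))"
      unfolding u sum_fun_apply sum_distrib_left by (rule sum.swap)
    also have "\<dots> = (\<Sum>C\<in>?Q. if C = D then u (indicator {r D}) else 0)"
      using sum_indicator_macro_class[OF D _ r] by (intro sum.cong) auto
    also have "\<dots> = u (indicator {r D})"
      using D finite_macro_classes by simp
    finally show ?thesis
      by simp
  qed
  then have "g = 0"
    unfolding u by (intro sum.neutral) (auto simp: fun_eq_iff)
  then show "g \<in> {0}"
    by simp
qed

lemma supported_subset_span_range_Bmacro: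
  assumes r: "\<And>C. C \<in> Vmacro A B // macro_conn A B \<Longrightarrow> r C \<in> C"
  shows "{g. \<forall>v. v \<notin> Vmacro A B \<longrightarrow> g v = 0}
    \<subseteq> funspace.span (range (Bmacro A B) \<union> (\<lambda>C. indicator {r C}) ` (Vmacro A B // macro_conn A B))"
    (is "_ \<subseteq> funspace.span ?RG")
proof -
  have "indicator {v} \<in> funspace.span ?RG" if v: "v \<in> Vmacro A B" for v
  proof -
    let ?C = "macro_conn A B `` {v}"
    have C: "?C \<in> Vmacro A B // macro_conn A B"
      using v by (auto simp: quotient_def)
    then have "indicator {r ?C} - indicator {v} \<in> range (Bmacro A B)"
      using r indicator_diff_in_range_Bmacro by blast
    then have "indicator {r ?C} - (indicator {r ?C} - indicator {v}) \<in> funspace.span ?RG"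
      using C by (intro funspace.span_diff funspace.span_base) auto
    then show ?thesis
      by simp
  qed
  then have "funspace.span ((\<lambda>a. indicator {a}) ` Vmacro A B) \<subseteq> funspace.span ?RG"
    by (intro funspace.span_minimal) auto
  then show ?thesis
    using funspace_span_indicators[OF finite_Vmacro] by simp
qed

lemma dim_range_Bmacro: "funspace.dim (range (Bmacro A B)) + c_macro A B = card (Vmacro A B)"
proof -
  let ?Q = "Vmacro A B // macro_conn A B"
  let ?SV = "{g :: 'v tensor \<Rightarrow> real. \<forall>v. v \<notin> Vmacro A B \<longrightarrow> g v = 0}"
  have "\<forall>C\<in>?Q. \<exists>v. v \<in> C"
    unfolding quotient_def by blast
  then obtain r where r: "\<And>C. C \<in> ?Q \<Longrightarrow> r C \<in> C"
    by metis
  let ?G = "(\<lambda>C. indicator {r C} :: 'v tensor \<Rightarrow> real) ` ?Q"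
  have SV: "funspace.span ((\<lambda>a. indicator {a}) ` Vmacro A B) = ?SV"
    using funspace_span_indicators[OF finite_Vmacro] .
  have range_SV: "range (Bmacro A B) \<subseteq> ?SV"
    using Bmacro_support by auto
  have "?G \<subseteq> ?SV"
    using r macro_class_subset by (fastforce simp: indicator_def)
  moreover have "funspace.subspace ?SV"
    unfolding SV[symmetric] by (rule funspace.subspace_span)
  ultimately have "funspace.span (range (Bmacro A B) \<union> ?G) \<subseteq> ?SV"
    using range_SV by (intro funspace.span_minimal Un_least)
  then have span_RG: "funspace.span (range (Bmacro A B) \<union> ?G) = ?SV"
    using supported_subset_span_range_Bmacro[OF r] by (rule subset_antisym)
  have "funspace.independent ?G"
    by (rule funspace.independent_mono[OF funspace_independent_indicators[of UNIV]]) auto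
  then have "funspace.dim (funspace.span (range (Bmacro A B) \<union> ?G))
      = funspace.dim (range (Bmacro A B)) + card ?G"
    using funspace.dim_span_Un_independent[OF subspace_range_Bmacro range_SV[folded SV] _ _
        range_Bmacro_inter_span_representatives[OF r]]
    by (simp add: finite_Vmacro finite_macro_classes)
  then have "card (Vmacro A B) = funspace.dim (range (Bmacro A B)) + card ?G"
    unfolding span_RG funspace_dim_supported[OF finite_Vmacro] .
  then show ?thesis
    using card_image[OF inj_on_indicator_representatives[OF r]] by (simp add: c_macro_def)
qed

end

lemma rank_Lmat:
  fixes A B :: "'e::finite \<Rightarrow> 'v::finite tensor"
  shows "rank (Lmat A B k) + c_macro A B + delta A B k = card (Vmacro A B)"
proof -
  let ?ker = "{x. Bmacro A B x = 0}"
  have Zk: "subspace (Zk A B k)"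
    unfolding Lmat_kernel[symmetric] subspace_def
    by (simp add: matrix_vector_right_distrib matrix_vector_mult_scaleR)
  have "rank (Lmat A B k) + dim (Zk A B k) = DIM(real^'e)"
    using dim_image_add_dim_kernel[OF matrix_vector_mul_linear subspace_UNIV, of "Lmat A B k"]
    by (simp add: rank_dim_range Lmat_kernel)
  moreover have "funspace.dim (range (Bmacro A B)) + dim ?ker = DIM(real^'e)"
    using eucl_funspace.dim_image_add_dim_kernel[OF linear_Bmacro[of A B] subspace_UNIV] by simp
  moreover have "?ker \<subseteq> Zk A B k"
  proof
    fix x
    assume "x \<in> ?ker"
    then have "bdry A B x = phi_hat A B 0"
      using phi_hat_Bmacro[of A B x] by simp
    then show "x \<in> Zk A B k"
      by (simp add: Zk_def trunc_def phi_hat_def fun_eq_iff)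
  qed
  then have "funspace.dim (Bmacro A B ` Zk A B k) + dim ?ker = dim (Zk A B k)"
    using eucl_funspace.dim_image_add_dim_kernel[OF linear_Bmacro[of A B] Zk] by (simp add: Int_absorb1)
  moreover have "Bmacro A B ` Zk A B k
      = range (Bmacro A B) \<inter> {f. trunc k (phi_hat A B f) = (\<lambda>_. 0)}"
    by (auto simp: phi_hat_Bmacro Zk_def)
  then have "delta A B k = funspace.dim (Bmacro A B ` Zk A B k)"
    by (simp add: delta_def)
  ultimately show ?thesis
    using dim_range_Bmacro[of A B] by linarith
qed

theorem theorem6p10:
  fixes A B :: "'e::finite \<Rightarrow> 'v::finite list \<Rightarrow> real" and k :: nat
  assumes finA: "\<forall>e. finite {w. A e w \<noteq> 0}"
      and finB: "\<forall>e. finite {w. B e w \<noteq> 0}"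
  shows "(transpose (Lmat A B k) = Lmat A B k \<and> (\<forall>x. 0 \<le> x \<bullet> (Lmat A B k *v x)))
    \<and> {x. Lmat A B k *v x = 0} = Zk A B k
    \<and> int (rank (Lmat A B k)) = int (card (Vmacro A B)) - int (c_macro A B) - int (delta A B k)
    \<and> (\<forall>l. k \<le> l \<longrightarrow>
          (\<forall>x. x \<bullet> (Lmat A B k *v x) \<le> x \<bullet> (Lmat A B l *v x))
        \<and> (\<forall>i < CARD('e). eigenvalues_asc (Lmat A B k) ! i \<le> eigenvalues_asc (Lmat A B l) ! i))"
proof -
  have "int (rank (Lmat A B k)) = int (card (Vmacro A B)) - int (c_macro A B) - int (delta A B k)"
    using rank_Lmat[of A B k] by linarith
  moreover have "eigenvalues_asc (Lmat A B k) ! i \<le> eigenvalues_asc (Lmat A B l) ! i"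
    if "k \<le> l" "i < CARD('e)" for l i
    using eigenvalues_asc_mono[OF Lmat_symmetric Lmat_symmetric Lmat_mono] that by blast
  ultimately show ?thesis
    by (simp add: Lmat_symmetric Lmat_psd Lmat_kernel Lmat_mono)
qed

end
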